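(* For the RHA process and every $n\ge0$, the family $(K_{nj})_{j\ge1}$ is independent of $\mathcal G_{\le n}$, and for every $j\ge1$ and all $l,m\in\{1,\dots,k_n\}$, $$P(K_{nj}=l,\,K_{n,j+1}=m)=\frac1{k_n^2}.$$
   Context: Random hierarchical association (RHA) process. Fix positive integers $(k_n)_{n\ge0}$ (perplexities) with $k_{n-1}\le k_n\le k_{n-1}^2$ for all $n\ge1$. On a probability space $(\Omega,\mathcal J,P)$ let, for each $n\ge1$, $(L_{nj},R_{nj})_{j=1}^{k_n}$ be the lexicographically sorted enumeration of a uniformly random $k_n$-element subset of $\{1,\dots,k_{n-1}\}^2$ (each of the $\binom{k_{n-1}^2}{k_n}$ subsets equally likely), independently over $n$. Let $(C_n)_{n\ge0}$ be independent, independent of all $(L_{nj},R_{nj})$, with $C_n$ uniform on $\{1,\dots,k_n\}$. Define strings $Y^0_j=j$ (length 1) for $1\le j\le k_0$ and $Y^n_j=Y^{n-1}_{L_{nj}}Y^{n-1}_{R_{nj}}$ (concatenation); so $Y^n_1,\dots,Y^n_{k_n}$ are distinct strings of length $2^n$. The RHA process is $\mathcal X=Y^0_{C_0}Y^1_{C_1}Y^2_{C_2}\cdots=X_1X_2X_3\cdots$, $X_{k:l}=X_k\cdots X_l$. For $n\ge0$, $j\ge1$, $X^n_j=X_{j2^n:(j+1)2^n-1}$ (so $X^n_1=Y^n_{C_n}$), and $K_{nj}$ is the unique index with $X^n_j=Y^n_{K_{nj}}$. $\mathcal G_{\le n}=(L_{lj},R_{lj})_{1\le l\le n,\,1\le j\le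 k_l}$ ($\mathcal G_{\le 0}$ is trivial). *)

theory Defs
  imports "HOL-Probability.Probability"
begin

text \<open>A realisation of the random data is given by
  S :: nat \<Rightarrow> (nat \<times> nat) set  (S n = the random k_n-element subset at level n, n \<ge> 1)
  c :: nat \<Rightarrow> nat                  (c n = C_n).\<close>

definition lex_less :: "nat \<times> nat \<Rightarrow> nat \<times> nat \<Rightarrow> bool" where
  "lex_less p q \<longleftrightarrow> fst p < fst q \<or> (fst p = fst q \<and> snd p < snd q)"

text \<open>(L_{nj}, R_{nj}): the j-th element (j \<ge> 1) of the lexicographically sorted
  enumeration of the finite subset A, i.e. the element with exactly j - 1 elements of A
  lexicographically below it.\<close>
definition rha_pair :: "(nat \<times> nat) set \<Rightarrow> nat \<Rightarrow> nat \<times> nat" where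
  "rha_pair A j = (THE p. p \<in> A \<and> card {q \<in> A. lex_less q p} = j - 1)"

definition rha_L :: "(nat \<Rightarrow> (nat \<times> nat) set) \<Rightarrow> nat \<Rightarrow> nat \<Rightarrow> nat" where
  "rha_L S n j = fst (rha_pair (S n) j)"

definition rha_R :: "(nat \<Rightarrow> (nat \<times> nat) set) \<Rightarrow> nat \<Rightarrow> nat \<Rightarrow> nat" where
  "rha_R S n j = snd (rha_pair (S n) j)"

fun rha_Y :: "(nat \<Rightarrow> (nat \<times> nat) set) \<Rightarrow> nat \<Rightarrow> nat \<Rightarrow> nat list" where
  "rha_Y S 0 j = [j]"
| "rha_Y S (Suc n) j = rha_Y S n (rha_L S (Suc n) j) @ rha_Y S n (rha_R S (Suc n) j)"

text \<open>Position i \<ge> 1 of X lies in the block Y^m_{C_m} with 2^m \<le> i < 2^(m+1).\<close>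
definition rha_blk :: "nat \<Rightarrow> nat" where
  "rha_blk i = (LEAST m. i < 2 ^ Suc m)"

text \<open>The symbol X_i (i \<ge> 1) of X = Y^0_{C_0} Y^1_{C_1} Y^2_{C_2} ...\<close>
definition rha_X :: "(nat \<Rightarrow> (nat \<times> nat) set) \<Rightarrow> (nat \<Rightarrow> nat) \<Rightarrow> nat \<Rightarrow> nat" where
  "rha_X S c i = rha_Y S (rha_blk i) (c (rha_blk i)) ! (i - 2 ^ rha_blk i)"

definition rha_Xblock :: "(nat \<Rightarrow> (nat \<times> nat) set) \<Rightarrow> (nat \<Rightarrow> nat) \<Rightarrow> nat \<Rightarrow> nat \<Rightarrow> nat list" where
  "rha_Xblock S c n j = map (rha_X S c) [j * 2 ^ n ..< (j + 1) * 2 ^ n]"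

definition rha_K :: "(nat \<Rightarrow> nat) \<Rightarrow> (nat \<Rightarrow> (nat \<times> nat) set) \<Rightarrow> (nat \<Rightarrow> nat) \<Rightarrow> nat \<Rightarrow> nat \<Rightarrow> nat" where
  "rha_K k S c n j = (THE l. l \<in> {1..k n} \<and> rha_Xblock S c n j = rha_Y S n l)"

definition rha_subsets :: "(nat \<Rightarrow> nat) \<Rightarrow> nat \<Rightarrow> (nat \<times> nat) set set" where
  "rha_subsets k n = {A. A \<subseteq> {1..k (n - 1)} \<times> {1..k (n - 1)} \<and> card A = k n}"

text \<open>Index set of G_{\<le> n} = (L_{lj}, R_{lj}), 1 \<le> l \<le> n, 1 \<le> j \<le> k_l.\<close>
definition rha_Gidx :: "(nat \<Rightarrow> nat) \<Rightarrow> nat \<Rightarrow> (nat \<times> nat) set" where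
  "rha_Gidx k n = {(l, j). 1 \<le> l \<and> l \<le> n \<and> 1 \<le> j \<and> j \<le> k l}"

end

(*
  Write j = 2^e + t with t < 2^e. Then X^n_j is the t-th block of length 2^n of
  Y^(n+e)_(C_(n+e)), so K_nj is obtained from C_(n+e) by descending e levels of the hierarchy,
  each step replacing an index a at level q by L_qa or R_qa. Hence K_nj depends only on the C_m and
  on the subsets drawn at levels above n, which are independent of G_<=n.

  Two consecutive blocks either descend from one index a at some level q, which splits into the
  pair (L_qa, R_qa), or they straddle a boundary, where a pair (a, b) of neighbouring indices is
  sent to (R_qa, L_qb). A uniform index (pair), independent of the uniformly random k_q-subset
  drawn at level q, is mapped by either step to a uniform pair at level q - 1: the number of
  (subset, indices) mapped to a given pair depends only on the sizes, as it counts the k_q-subsets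
  containing one or two prescribed points. Descending to level n, (K_nj, K_n(j+1)) is uniform.
*)

theory Submission
  imports Defs "HOL-Library.Discrete_Functions"
begin

section \<open>Lexicographic enumeration\<close>

lemma lex_less_irrefl: "\<not> lex_less p p"
  by (simp add: lex_less_def)

lemma lex_less_trans: "lex_less p q \<Longrightarrow> lex_less q r \<Longrightarrow> lex_less p r"
  by (auto simp: lex_less_def)

lemma lex_less_linear: "p \<noteq> q \<Longrightarrow> lex_less p q \<or> lex_less q p"
  by (cases p; cases q) (auto simp: lex_less_def)

definition lex_rank :: "(nat \<times> nat) set \<Rightarrow> nat \<times> nat \<Rightarrow> nat" where
  "lex_rank A p = card {q \<in> A. lex_less q p}"

lemma lex_rank_less_card: "finite A \<Longrightarrow> p \<in> A \<Longrightarrow> lex_rank A p < card A"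
  unfolding lex_rank_def by (rule psubset_card_mono) (use lex_less_irrefl in blast)+

lemma lex_rank_strict_mono:
  assumes "finite A" "p \<in> A" "lex_less p q"
  shows "lex_rank A p < lex_rank A q"
  unfolding lex_rank_def
proof (rule psubset_card_mono)
  have "{r \<in> A. lex_less r p} \<subseteq> {r \<in> A. lex_less r q}"
    using assms(3) lex_less_trans by blast
  moreover have "p \<in> {r \<in> A. lex_less r q} - {r \<in> A. lex_less r p}"
    using assms(2,3) lex_less_irrefl by blast
  ultimately show "{r \<in> A. lex_less r p} \<subset> {r \<in> A. lex_less r q}"
    by blast
qed (use assms in simp)

lemma bij_betw_lex_rank: "finite A \<Longrightarrow> bij_betw (lex_rank A) A {..<card A}"
proof -
  assume A: "finite A"
  have "inj_on (lex_rank A) A"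
    by (rule inj_onI) (metis A lex_rank_strict_mono lex_less_linear less_irrefl)
  moreover have "lex_rank A ` A \<subseteq> {..<card A}"
    using lex_rank_less_card A by auto
  ultimately show ?thesis
    by (simp add: bij_betw_def card_subset_eq card_image)
qed

lemma rha_pair_eq_inv_lex_rank:
  assumes "finite A" "j \<in> {1..card A}"
  shows "rha_pair A j = inv_into A (lex_rank A) (j - 1)"
proof -
  note bij = bij_betw_lex_rank[OF assms(1)]
  define p where "p = inv_into A (lex_rank A) (j - 1)"
  have "j - 1 \<in> {..<card A}" using assms(2) by auto
  then have p: "p \<in> A" "lex_rank A p = j - 1"
    unfolding p_def using bij by (auto simp: bij_betw_def inv_into_into f_inv_into_f)
  show ?thesis
    unfolding rha_pair_def p_def[symmetric] lex_rank_def[symmetric]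
    by (rule the_equality) (use p bij in \<open>auto simp: bij_betw_def inj_on_def\<close>)
qed

lemma bij_betw_rha_pair: "finite A \<Longrightarrow> bij_betw (rha_pair A) {1..card A} A"
proof -
  assume A: "finite A"
  have "bij_betw (\<lambda>j. j - 1) {1..card A} {..<card A}"
    by (rule bij_betw_byWitness[where f' = Suc]) auto
  then have "bij_betw (inv_into A (lex_rank A) \<circ> (\<lambda>j. j - 1)) {1..card A} A"
    by (rule bij_betw_trans) (rule bij_betw_inv_into[OF bij_betw_lex_rank[OF A]])
  moreover have "bij_betw (rha_pair A) {1..card A} A
      \<longleftrightarrow> bij_betw (inv_into A (lex_rank A) \<circ> (\<lambda>j. j - 1)) {1..card A} A"
    by (rule bij_betw_cong) (simp only: rha_pair_eq_inv_lex_rank[OF A] comp_def)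
  ultimately show ?thesis by simp
qed

lemma card_rha_pair_filter:
  assumes "finite A"
  shows "card {j \<in> {1..card A}. P (rha_pair A j)} = card {p \<in> A. P p}"
proof -
  note bij = bij_betw_rha_pair[OF assms]
  have "inj_on (rha_pair A) {j \<in> {1..card A}. P (rha_pair A j)}"
    by (rule inj_on_subset[OF bij_betw_imp_inj_on[OF bij] Collect_subset])
  then have "card {j \<in> {1..card A}. P (rha_pair A j)} = card {p \<in> rha_pair A ` {1..card A}. P p}"
    by (simp add: card_image Compr_image_eq)
  then show ?thesis
    using bij_betw_imp_surj_on[OF bij] by simp
qed

section \<open>Counting subsets containing prescribed points\<close>

definition n_supersets :: "nat \<Rightarrow> nat \<Rightarrow> nat \<Rightarrow> nat" where
  "n_supersets n p m = (if p \<le> m then (n - p) choose (m - p) else 0)"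

lemma card_subsets_containing:
  assumes "finite U" "P \<subseteq> U"
  shows "card {T. T \<subseteq> U \<and> card T = m \<and> P \<subseteq> T} = n_supersets (card U) (card P) m"
proof (cases "card P \<le> m")
  case True
  have fin: "finite P" using assms finite_subset by blast
  have "bij_betw (\<lambda>T. T - P) {T. T \<subseteq> U \<and> card T = m \<and> P \<subseteq> T} {T. T \<subseteq> U - P \<and> card T = m - card P}"
  proof (rule bij_betw_byWitness[where f' = "\<lambda>T. T \<union> P"])
    show "(\<lambda>T. T - P) ` {T. T \<subseteq> U \<and> card T = m \<and> P \<subseteq> T} \<subseteq> {T. T \<subseteq> U - P \<and> card T = m - card P}"
      using assms(1) fin by (auto simp: card_Diff_subset dest: finite_subset)
    show "(\<lambda>T. T \<union> P) ` {T. T \<subseteq> U - P \<and> card T = m - card P} \<subseteq> {T. T \<subseteq> U \<and> card T = m \<and> P \<subseteq> T}"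
    proof clarify
      fix T assume T: "T \<subseteq> U - P" "card T = m - card P"
      then have "finite T" using assms(1) finite_subset by blast
      then have "card (T \<union> P) = card T + card P"
        using T(1) fin by (intro card_Un_disjoint) auto
      with T fin True show "T \<union> P \<subseteq> U \<and> card (T \<union> P) = m \<and> P \<subseteq> T \<union> P"
        using assms(2) by (auto simp: card_Un_disjoint)
    qed
  qed auto
  then have "card {T. T \<subseteq> U \<and> card T = m \<and> P \<subseteq> T} = card (U - P) choose (m - card P)"
    using assms(1) by (simp add: bij_betw_same_card n_subsets)
  moreover have "card (U - P) = card U - card P"
    using assms(2) by (rule card_Diff_subset[OF fin])
  ultimately show ?thesis
    using True unfolding n_supersets_def by presburger
next
  case False
  have "card P \<le> card T" if "T \<subseteq> U" "P \<subseteq> T" for T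
    using that assms(1) by (meson card_mono finite_subset)
  then have "{T. T \<subseteq> U \<and> card T = m \<and> P \<subseteq> T} = {}"
    using False by auto
  then show ?thesis
    using False unfolding n_supersets_def by (simp only: card.empty if_False)
qed

lemma card_product_filter:
  "finite A \<Longrightarrow> finite B \<Longrightarrow> card {(a, b) \<in> A \<times> B. Q a b} = (\<Sum>a\<in>A. card {b \<in> B. Q a b})"
proof -
  assume "finite A" "finite B"
  moreover have "{(a, b) \<in> A \<times> B. Q a b} = (SIGMA a:A. {b \<in> B. Q a b})" by auto
  ultimately show ?thesis by simp
qed

lemma card_rha_pair_fibre:
  assumes "finite U" "p \<in> U"
  shows "card {(T, a) \<in> {T. T \<subseteq> U \<and> card T = m} \<times> {1..m}. rha_pair T a = p}
    = n_supersets (card U) 1 m"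
proof -
  let ?Ts = "{T. T \<subseteq> U \<and> card T = m}"
  have fin: "finite ?Ts" using assms(1) by simp
  have "card {(T, a) \<in> ?Ts \<times> {1..m}. rha_pair T a = p} = (\<Sum>T\<in>?Ts. card {a \<in> {1..m}. rha_pair T a = p})"
    using fin by (rule card_product_filter) simp
  also have "\<dots> = (\<Sum>T\<in>?Ts. if p \<in> T then 1 else 0)"
  proof (rule sum.cong)
    fix T assume "T \<in> ?Ts"
    then have "finite T" "card T = m" using assms(1) finite_subset by auto
    then have "card {a \<in> {1..m}. rha_pair T a = p} = card {q \<in> T. q = p}"
      using card_rha_pair_filter[of T "\<lambda>q. q = p"] by simp
    also have "{q \<in> T. q = p} = (if p \<in> T then {p} else {})" by auto
    finally show "card {a \<in> {1..m}. rha_pair T a = p} = (if p \<in> T then 1 else 0)" by simp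
  qed simp
  also have "\<dots> = card {T. T \<subseteq> U \<and> card T = m \<and> {p} \<subseteq> T}"
    using fin by (simp add: sum.If_cases Int_def)
  also have "\<dots> = n_supersets (card U) 1 m"
    using card_subsets_containing[of U "{p}"] assms by simp
  finally show ?thesis .
qed

lemma sum_card_filter_swap:
  assumes "finite A" "finite B"
  shows "(\<Sum>a\<in>A. card {b \<in> B. Q a b}) = (\<Sum>b\<in>B. card {a \<in> A. Q a b})"
proof -
  have "(\<Sum>a\<in>A. card {b \<in> B. Q a b}) = card {(a, b) \<in> A \<times> B. Q a b}"
    using assms by (rule card_product_filter[symmetric])
  also have "\<dots> = card (prod.swap ` {(b, a) \<in> B \<times> A. Q a b})"
    by (rule arg_cong[where f = card]) auto
  also have "\<dots> = (\<Sum>b\<in>B. card {a \<in> A. Q a b})"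
    using card_product_filter[OF assms(2,1), of "\<lambda>b a. Q a b"] by (simp add: card_image)
  finally show ?thesis .
qed

lemma card_rha_pair_crossing_indices:
  assumes "finite T" "card T = m" "T \<subseteq> G \<times> H"
  shows "card {ab \<in> {1..m} \<times> {1..m}. snd (rha_pair T (fst ab)) = x \<and> fst (rha_pair T (snd ab)) = y}
    = card {z \<in> G \<times> H. (fst z, x) \<in> T \<and> (y, snd z) \<in> T}"
proof -
  let ?X = "{p \<in> T. snd p = x}" and ?Y = "{p \<in> T. fst p = y}"
  have "{ab \<in> {1..m} \<times> {1..m}. snd (rha_pair T (fst ab)) = x \<and> fst (rha_pair T (snd ab)) = y}
      = {a \<in> {1..m}. snd (rha_pair T a) = x} \<times> {b \<in> {1..m}. fst (rha_pair T b) = y}"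
    by auto
  then have "card {ab \<in> {1..m} \<times> {1..m}. snd (rha_pair T (fst ab)) = x \<and> fst (rha_pair T (snd ab)) = y}
      = card (?X \<times> ?Y)"
    using card_rha_pair_filter[OF assms(1), of "\<lambda>p. snd p = x"]
      card_rha_pair_filter[OF assms(1), of "\<lambda>p. fst p = y"] assms(2)
    by (simp add: card_cartesian_product)
  also have "\<dots> = card ((\<lambda>(p, q). (fst p, snd q)) ` (?X \<times> ?Y))"
    by (rule card_image[symmetric]) (auto simp: inj_on_def)
  also have "(\<lambda>(p, q). (fst p, snd q)) ` (?X \<times> ?Y) = {z \<in> G \<times> H. (fst z, x) \<in> T \<and> (y, snd z) \<in> T}"
    using assms(3) by force
  finally show ?thesis .
qed

lemma card_rha_pair_crossing_fibre:
  assumes "finite G" "finite H" "x \<in> H" "y \<in> G"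
  defines "N \<equiv> card G * card H"
  shows "card {(T, a, b) \<in> {T. T \<subseteq> G \<times> H \<and> card T = m} \<times> {1..m} \<times> {1..m}.
              snd (rha_pair T a) = x \<and> fst (rha_pair T b) = y}
    = n_supersets N 1 m + (N - 1) * n_supersets N 2 m"
proof -
  let ?U = "G \<times> H" and ?Ts = "{T. T \<subseteq> G \<times> H \<and> card T = m}"
  let ?P = "\<lambda>T ab. snd (rha_pair T (fst ab)) = x \<and> fst (rha_pair T (snd ab)) = y"
  let ?Q = "\<lambda>T z. (fst z, x) \<in> T \<and> (y, snd z) \<in> T"
  have finU: "finite ?U" and finTs: "finite ?Ts" using assms(1,2) by simp_all
  have "card {(T, a, b) \<in> ?Ts \<times> {1..m} \<times> {1..m}. snd (rha_pair T a) = x \<and> fst (rha_pair T b) = y}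
      = card {(T, ab) \<in> ?Ts \<times> ({1..m} \<times> {1..m}). ?P T ab}"
    by (rule arg_cong[where f = card]) auto
  also have "\<dots> = (\<Sum>T\<in>?Ts. card {ab \<in> {1..m} \<times> {1..m}. ?P T ab})"
    using finTs by (rule card_product_filter) simp
  also have "\<dots> = (\<Sum>T\<in>?Ts. card {z \<in> ?U. ?Q T z})"
    using finU by (intro sum.cong refl card_rha_pair_crossing_indices) (auto intro: finite_subset)
  also have "\<dots> = (\<Sum>z\<in>?U. card {T \<in> ?Ts. ?Q T z})"
    using finTs finU by (rule sum_card_filter_swap)
  also have "\<dots> = (\<Sum>z\<in>?U. n_supersets N (card {(fst z, x), (y, snd z)}) m)"
  proof (rule sum.cong[OF refl])
    fix z assume "z \<in> ?U"
    then have "{(fst z, x), (y, snd z)} \<subseteq> ?U" using assms(3,4) by auto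
    then have "card {T. T \<subseteq> ?U \<and> card T = m \<and> {(fst z, x), (y, snd z)} \<subseteq> T}
        = n_supersets N (card {(fst z, x), (y, snd z)}) m"
      unfolding N_def card_cartesian_product[symmetric] by (rule card_subsets_containing[OF finU])
    moreover have "{T \<in> ?Ts. ?Q T z} = {T. T \<subseteq> ?U \<and> card T = m \<and> {(fst z, x), (y, snd z)} \<subseteq> T}"
      by auto
    ultimately show "card {T \<in> ?Ts. ?Q T z} = n_supersets N (card {(fst z, x), (y, snd z)}) m"
      by simp
  qed
  also have "\<dots> = n_supersets N 1 m + (\<Sum>z\<in>?U - {(y, x)}. n_supersets N 2 m)"
  proof -
    have "z \<noteq> (y, x) \<Longrightarrow> card {(fst z, x), (y, snd z)} = 2" for z
      by (cases z) auto
    then show ?thesis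
      using finU assms(3,4) by (simp add: sum.remove[of ?U "(y, x)"])
  qed
  also have "\<dots> = n_supersets N 1 m + (N - 1) * n_supersets N 2 m"
    using finU assms(3,4) unfolding N_def by (simp add: card_cartesian_product)
  finally show ?thesis .
qed

section \<open>Strings and blocks\<close>

definition rha_admissible :: "(nat \<Rightarrow> nat) \<Rightarrow> (nat \<Rightarrow> (nat \<times> nat) set) \<Rightarrow> bool" where
  "rha_admissible k S \<longleftrightarrow> (\<forall>i\<ge>1. S i \<in> rha_subsets k i)"

lemma finite_rha_subsets: "finite (rha_subsets k q)"
  unfolding rha_subsets_def by (rule finite_subset[of _ "Pow ({1..k (q - 1)} \<times> {1..k (q - 1)})"]) auto

lemma card_rha_subsets: "card (rha_subsets k q) = (k (q - 1))\<^sup>2 choose k q"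
  unfolding rha_subsets_def by (simp add: n_subsets card_cartesian_product power2_eq_square)

lemma finite_of_mem_rha_subsets: "A \<in> rha_subsets k q \<Longrightarrow> finite A"
  unfolding rha_subsets_def by (auto intro: finite_subset)

lemma bij_betw_rha_pair_rha_subsets:
  "A \<in> rha_subsets k q \<Longrightarrow> bij_betw (rha_pair A) {1..k q} A"
  using bij_betw_rha_pair[OF finite_of_mem_rha_subsets] unfolding rha_subsets_def by force

lemma rha_pair_range:
  assumes "A \<in> rha_subsets k q" "a \<in> {1..k q}"
  shows "rha_pair A a \<in> {1..k (q - 1)} \<times> {1..k (q - 1)}"
proof -
  have "A \<subseteq> {1..k (q - 1)} \<times> {1..k (q - 1)}"
    using assms(1) unfolding rha_subsets_def by auto
  then show ?thesis
    using bij_betw_apply[OF bij_betw_rha_pair_rha_subsets[OF assms(1)] assms(2)] by auto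
qed

lemma rha_LR_range:
  assumes "rha_admissible k S" "1 \<le> q" "a \<in> {1..k q}"
  shows "rha_L S q a \<in> {1..k (q - 1)}" "rha_R S q a \<in> {1..k (q - 1)}"
  using rha_pair_range[of "S q" k q a] assms
  unfolding rha_admissible_def rha_L_def rha_R_def by (auto simp: mem_Times_iff)

lemma length_rha_Y [simp]: "length (rha_Y S q a) = 2 ^ q"
  by (induction q arbitrary: a) auto

lemma inj_on_rha_Y:
  assumes "rha_admissible k S"
  shows "inj_on (rha_Y S q) {1..k q}"
proof (induction q)
  case 0
  show ?case by (simp add: inj_on_def)
next
  case (Suc q)
  show ?case
  proof (rule inj_onI)
    fix a b assume ab: "a \<in> {1..k (Suc q)}" "b \<in> {1..k (Suc q)}" "rha_Y S (Suc q) a = rha_Y S (Suc q) b"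
    have range: "rha_L S (Suc q) c \<in> {1..k q}" "rha_R S (Suc q) c \<in> {1..k q}"
      if "c \<in> {1..k (Suc q)}" for c
      using rha_LR_range[OF assms, of "Suc q" c] that by auto
    from ab(3) have "rha_Y S q (rha_L S (Suc q) a) = rha_Y S q (rha_L S (Suc q) b)"
      "rha_Y S q (rha_R S (Suc q) a) = rha_Y S q (rha_R S (Suc q) b)"
      by (simp_all add: append_eq_append_conv)
    then have "rha_L S (Suc q) a = rha_L S (Suc q) b" "rha_R S (Suc q) a = rha_R S (Suc q) b"
      using Suc.IH range ab(1,2) by (meson inj_onD)+
    then have "rha_pair (S (Suc q)) a = rha_pair (S (Suc q)) b"
      unfolding rha_L_def rha_R_def by (simp add: prod_eq_iff)
    moreover have "S (Suc q) \<in> rha_subsets k (Suc q)"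
      using assms unfolding rha_admissible_def by simp
    ultimately show "a = b"
      using bij_betw_imp_inj_on[OF bij_betw_rha_pair_rha_subsets] ab(1,2) by (blast dest: inj_onD)
  qed
qed

fun subblock_index :: "(nat \<Rightarrow> (nat \<times> nat) set) \<Rightarrow> nat \<Rightarrow> nat \<Rightarrow> nat \<Rightarrow> nat \<Rightarrow> nat" where
  "subblock_index S n 0 t a = a"
| "subblock_index S n (Suc d) t a =
    (if t < 2 ^ d then subblock_index S n d t (rha_L S (n + Suc d) a)
     else subblock_index S n d (t - 2 ^ d) (rha_R S (n + Suc d) a))"

lemma subblock_index_last:
  "subblock_index S n (Suc d) (2 ^ Suc d - 1) a = subblock_index S n d (2 ^ d - 1) (rha_R S (n + Suc d) a)"
proof -
  have "(1::nat) \<le> 2 ^ d" by simp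
  then have "\<not> 2 ^ Suc d - 1 < (2::nat) ^ d" "2 ^ Suc d - 1 - 2 ^ d = (2::nat) ^ d - 1"
    by simp_all
  then show ?thesis
    by (simp only: subblock_index.simps if_False)
qed

lemma subblock_index_first:
  "subblock_index S n (Suc d) 0 a = subblock_index S n d 0 (rha_L S (n + Suc d) a)"
  by simp

lemma rha_Y_subblock_index:
  assumes "rha_admissible k S"
  shows "a \<in> {1..k (n + d)} \<Longrightarrow> t < 2 ^ d \<Longrightarrow> subblock_index S n d t a \<in> {1..k n} \<and>
    take (2 ^ n) (drop (t * 2 ^ n) (rha_Y S (n + d) a)) = rha_Y S n (subblock_index S n d t a)"
proof (induction d arbitrary: t a)
  case 0
  then show ?case by simp
next
  case (Suc d)
  let ?l = "rha_L S (n + Suc d) a" and ?r = "rha_R S (n + Suc d) a"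
  have lr: "?l \<in> {1..k (n + d)}" "?r \<in> {1..k (n + d)}"
    using rha_LR_range[OF assms, of "n + Suc d" a] Suc.prems(1) by auto
  have Y: "rha_Y S (n + Suc d) a = rha_Y S (n + d) ?l @ rha_Y S (n + d) ?r"
    by simp
  have len: "length (rha_Y S (n + d) ?l) = 2 ^ d * 2 ^ n"
    by (simp add: power_add mult.commute)
  show ?case
  proof (cases "t < 2 ^ d")
    case True
    then have "t * 2 ^ n + 2 ^ n \<le> 2 ^ d * 2 ^ n"
      by (metis mult_Suc mult_le_mono1 Suc_leI add.commute)
    then show ?thesis
      using Suc.IH[OF lr(1) True] True Y len by (simp add: drop_append take_append)
  next
    case False
    then have "t * 2 ^ n - 2 ^ d * 2 ^ n = (t - 2 ^ d) * 2 ^ n" "2 ^ d * 2 ^ n \<le> t * 2 ^ n"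
      by (simp_all add: diff_mult_distrib)
    moreover have "t - 2 ^ d < 2 ^ d"
      using False Suc.prems(2) by simp
    ultimately show ?thesis
      using Suc.IH[OF lr(2)] False Y len by (simp add: drop_append)
  qed
qed

lemma rha_blk_eqI:
  assumes "2 ^ m \<le> i" "i < 2 ^ Suc m"
  shows "rha_blk i = m"
  unfolding rha_blk_def
proof (rule Least_equality)
  fix m' assume "i < 2 ^ Suc m'"
  with assms(1) have "(2::nat) ^ m < 2 ^ Suc m'" by linarith
  then show "m \<le> m'"
    using power_less_imp_less_exp[of "2::nat" m "Suc m'"] by simp
qed (rule assms(2))

lemma rha_Xblock_eq:
  assumes "t < 2 ^ e"
  shows "rha_Xblock S c n (2 ^ e + t) = take (2 ^ n) (drop (t * 2 ^ n) (rha_Y S (n + e) (c (n + e))))"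
proof (rule nth_equalityI)
  have "t * 2 ^ n + 2 ^ n \<le> 2 ^ e * 2 ^ n"
    using assms by (metis mult_Suc mult_le_mono1 Suc_leI add.commute)
  then have fits: "t * 2 ^ n + 2 ^ n \<le> 2 ^ (n + e)"
    by (simp add: power_add mult.commute)
  then show "length (rha_Xblock S c n (2 ^ e + t)) = length (take (2 ^ n) (drop (t * 2 ^ n) (rha_Y S (n + e) (c (n + e)))))"
    by (simp add: rha_Xblock_def algebra_simps)
  fix r assume "r < length (rha_Xblock S c n (2 ^ e + t))"
  then have r: "r < 2 ^ n"
    by (simp add: rha_Xblock_def algebra_simps)
  let ?i = "(2 ^ e + t) * 2 ^ n + r"
  have i: "?i = 2 ^ (n + e) + (t * 2 ^ n + r)"
    by (simp add: algebra_simps power_add)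
  have blk: "rha_blk ?i = n + e"
    using fits r unfolding i by (intro rha_blk_eqI) auto
  have "rha_Xblock S c n (2 ^ e + t) ! r = rha_X S c ?i"
    using r by (simp add: rha_Xblock_def)
  also have "\<dots> = rha_Y S (n + e) (c (n + e)) ! (t * 2 ^ n + r)"
    unfolding rha_X_def blk by (simp add: i)
  also have "\<dots> = take (2 ^ n) (drop (t * 2 ^ n) (rha_Y S (n + e) (c (n + e)))) ! r"
    using r fits by simp
  finally show "rha_Xblock S c n (2 ^ e + t) ! r = take (2 ^ n) (drop (t * 2 ^ n) (rha_Y S (n + e) (c (n + e)))) ! r" .
qed

lemma rha_K_eq_subblock_index:
  assumes "rha_admissible k S" "\<And>m. c m \<in> {1..k m}" "t < 2 ^ e"
  shows "rha_K k S c n (2 ^ e + t) = subblock_index S n e t (c (n + e))"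
  unfolding rha_K_def
proof (rule the_equality)
  note sub = rha_Y_subblock_index[OF assms(1) assms(2) assms(3)]
  show "subblock_index S n e t (c (n + e)) \<in> {1..k n} \<and>
      rha_Xblock S c n (2 ^ e + t) = rha_Y S n (subblock_index S n e t (c (n + e)))"
    using sub rha_Xblock_eq[OF assms(3)] by simp
  fix l assume "l \<in> {1..k n} \<and> rha_Xblock S c n (2 ^ e + t) = rha_Y S n l"
  then show "l = subblock_index S n e t (c (n + e))"
    using inj_onD[OF inj_on_rha_Y[OF assms(1)]] sub rha_Xblock_eq[OF assms(3)] by metis
qed

lemma binary_decomposition:
  assumes "1 \<le> (j::nat)"
  obtains e t where "j = 2 ^ e + t" "t < 2 ^ e"
proof
  show "j = 2 ^ floor_log j + (j - 2 ^ floor_log j)"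
    using floor_log_exp2_le[of j] assms by simp
  show "j - 2 ^ floor_log j < 2 ^ floor_log j"
    using floor_log_exp2_gt[of j] by simp
qed

section \<open>Events determined by a set of coordinates\<close>

locale rha_process = prob_space M for M :: "'a measure" +
  fixes k :: "nat \<Rightarrow> nat" and S :: "nat \<Rightarrow> 'a \<Rightarrow> (nat \<times> nat) set" and C :: "nat \<Rightarrow> 'a \<Rightarrow> nat"
  assumes S_range: "\<And>i \<omega>. i \<ge> 1 \<Longrightarrow> \<omega> \<in> space M \<Longrightarrow> S i \<omega> \<in> rha_subsets k i"
    and S_unif: "\<And>i A. i \<ge> 1 \<Longrightarrow> A \<in> rha_subsets k i \<Longrightarrow>
        prob {\<omega> \<in> space M. S i \<omega> = A} = 1 / real ((k (i - 1))\<^sup>2 choose k i)"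
    and C_range: "\<And>i \<omega>. \<omega> \<in> space M \<Longrightarrow> C i \<omega> \<in> {1..k i}"
    and C_unif: "\<And>i l. l \<in> {1..k i} \<Longrightarrow> prob {\<omega> \<in> space M. C i \<omega> = l} = 1 / real (k i)"
    and indep: "indep_vars (\<lambda>_. count_space UNIV)
        (\<lambda>i \<omega>. case i of Inl m \<Rightarrow> Inl (S m \<omega>) | Inr m \<Rightarrow> Inr (C m \<omega>))
        (Inl ` {1..} \<union> range Inr)"
begin

definition coord :: "nat + nat \<Rightarrow> 'a \<Rightarrow> (nat \<times> nat) set + nat" where
  "coord i \<omega> = (case i of Inl m \<Rightarrow> Inl (S m \<omega>) | Inr m \<Rightarrow> Inr (C m \<omega>))"

definition coords :: "(nat + nat) set" where
  "coords = Inl ` {1..} \<union> range Inr"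

lemma coords_Inl: "1 \<le> q \<Longrightarrow> Inl q \<in> coords"
  by (simp add: coords_def)

lemma coords_Inr: "Inr q \<in> coords"
  by (simp add: coords_def)

definition coord_events :: "nat + nat \<Rightarrow> 'a set set" where
  "coord_events i = {coord i -` A \<inter> space M | A. A \<in> sets (count_space UNIV)}"

definition sigma_coords :: "(nat + nat) set \<Rightarrow> 'a set set" where
  "sigma_coords J = sigma_sets (space M) (\<Union>i\<in>J. coord_events i)"

definition determined_by :: "(nat + nat) set \<Rightarrow> ('a \<Rightarrow> 'b) \<Rightarrow> bool" where
  "determined_by J f \<longleftrightarrow> (\<forall>B. {\<omega> \<in> space M. f \<omega> \<in> B} \<in> sigma_coords J)"

lemma indep_sets_coord_events: "indep_sets coord_events coords"
  using indep unfolding indep_vars_def2 coord_events_def coord_def coords_def by simp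

lemma sigma_coords_subset_events: "J \<subseteq> coords \<Longrightarrow> sigma_coords J \<subseteq> events"
  using indep_sets_coord_events unfolding sigma_coords_def indep_sets_def
  by (intro sets.sigma_sets_subset) auto

lemma Int_stable_coord_events: "Int_stable (coord_events i)"
  unfolding Int_stable_def
proof clarify
  fix a b assume "a \<in> coord_events i" "b \<in> coord_events i"
  then obtain A B where "a = coord i -` A \<inter> space M" "b = coord i -` B \<inter> space M"
    unfolding coord_events_def by blast
  then have "a \<inter> b = coord i -` (A \<inter> B) \<inter> space M"
    by blast
  then show "a \<inter> b \<in> coord_events i"
    unfolding coord_events_def by (intro CollectI exI[of _ "A \<inter> B"]) simp
qed

lemma indep_set_sigma_coords:
  assumes "J1 \<subseteq> coords" "J2 \<subseteq> coords" "J1 \<inter> J2 = {}"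
  shows "indep_set (sigma_coords J1) (sigma_coords J2)"
proof -
  have "indep_sets coord_events (\<Union>b. case_bool J1 J2 b)"
    using assms by (intro indep_sets_mono_index[OF _ indep_sets_coord_events])
      (auto split: bool.split_asm)
  then have "indep_sets (\<lambda>b. sigma_sets (space M) (\<Union>i\<in>case_bool J1 J2 b. coord_events i)) UNIV"
    by (rule indep_sets_collect_sigma)
      (use assms Int_stable_coord_events in \<open>auto simp: disjoint_family_on_def split: bool.split\<close>)
  moreover have "(\<lambda>b. sigma_sets (space M) (\<Union>i\<in>case_bool J1 J2 b. coord_events i)) = case_bool (sigma_coords J1) (sigma_coords J2)"
    by (rule ext) (simp add: sigma_coords_def split: bool.split)
  ultimately show ?thesis
    unfolding indep_set_def by simp
qed

lemma determined_by_comp: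
  assumes "determined_by J f"
  shows "determined_by J (\<lambda>\<omega>. g (f \<omega>))"
  unfolding determined_by_def
proof
  fix B
  have "{\<omega> \<in> space M. f \<omega> \<in> g -` B} \<in> sigma_coords J"
    using assms unfolding determined_by_def by blast
  then show "{\<omega> \<in> space M. g (f \<omega>) \<in> B} \<in> sigma_coords J"
    by simp
qed

lemma determined_by_cong:
  assumes "determined_by J f" "\<And>\<omega>. \<omega> \<in> space M \<Longrightarrow> f \<omega> = g \<omega>"
  shows "determined_by J g"
  unfolding determined_by_def
proof
  fix B
  have "{\<omega> \<in> space M. g \<omega> \<in> B} = {\<omega> \<in> space M. f \<omega> \<in> B}"
    using assms(2) by auto
  then show "{\<omega> \<in> space M. g \<omega> \<in> B} \<in> sigma_coords J"
    using assms(1) unfolding determined_by_def by simp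
qed

lemma determined_by_mono: "J \<subseteq> J' \<Longrightarrow> determined_by J f \<Longrightarrow> determined_by J' f"
  unfolding determined_by_def sigma_coords_def
  using sigma_sets_mono'[of "\<Union>i\<in>J. coord_events i" "\<Union>i\<in>J'. coord_events i" "space M"] by blast

lemma determined_by_coord:
  assumes "i \<in> J"
  shows "determined_by J (coord i)"
  unfolding determined_by_def
proof
  fix B
  have "{\<omega> \<in> space M. coord i \<omega> \<in> B} \<in> coord_events i"
    unfolding coord_events_def by (auto simp: vimage_def Int_def conj_commute)
  then show "{\<omega> \<in> space M. coord i \<omega> \<in> B} \<in> sigma_coords J"
    unfolding sigma_coords_def using assms by blast
qed

lemma determined_by_S: "Inl q \<in> J \<Longrightarrow> determined_by J (S q)"
  using determined_by_comp[OF determined_by_coord, of "Inl q" J projl] by (simp add: coord_def)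

lemma determined_by_C: "Inr q \<in> J \<Longrightarrow> determined_by J (C q)"
  using determined_by_comp[OF determined_by_coord, of "Inr q" J projr] by (simp add: coord_def)

lemma determined_by_pair:
  assumes "determined_by J f" "determined_by J g" "finite (f ` space M)"
  shows "determined_by J (\<lambda>\<omega>. (f \<omega>, g \<omega>))"
  unfolding determined_by_def
proof
  fix B
  interpret sigma_algebra "space M" "sigma_coords J"
    unfolding sigma_coords_def by (rule sigma_algebra_sigma_sets) (auto simp: coord_events_def)
  have "{\<omega> \<in> space M. (f \<omega>, g \<omega>) \<in> B}
      = (\<Union>v\<in>f ` space M. {\<omega> \<in> space M. f \<omega> \<in> {v}} \<inter> {\<omega> \<in> space M. g \<omega> \<in> {w. (v, w) \<in> B}})"
    by auto
  also have "\<dots> \<in> sigma_coords J"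
    using assms unfolding determined_by_def by (intro finite_UN Int) blast+
  finally show "{\<omega> \<in> space M. (f \<omega>, g \<omega>) \<in> B} \<in> sigma_coords J" .
qed

lemma finite_image_S: "1 \<le> q \<Longrightarrow> finite (S q ` space M)"
  using S_range by (intro finite_subset[OF _ finite_rha_subsets]) auto

section \<open>Uniformly distributed random variables\<close>

definition uniform_on :: "(nat + nat) set \<Rightarrow> 'b set \<Rightarrow> ('a \<Rightarrow> 'b) \<Rightarrow> bool" where
  "uniform_on J V Z \<longleftrightarrow> finite V \<and> determined_by J Z \<and> (\<forall>\<omega>\<in>space M. Z \<omega> \<in> V) \<and>
     (\<forall>v\<in>V. prob {\<omega> \<in> space M. Z \<omega> = v} = 1 / card V)"

lemma uniform_on_prob:
  assumes "J \<subseteq> coords" "uniform_on J V Z"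
  shows "prob {\<omega> \<in> space M. P (Z \<omega>)} = card {v \<in> V. P v} / card V"
proof -
  have V: "finite V" "\<And>\<omega>. \<omega> \<in> space M \<Longrightarrow> Z \<omega> \<in> V"
    and pt: "\<And>v. v \<in> V \<Longrightarrow> prob {\<omega> \<in> space M. Z \<omega> = v} = 1 / card V"
    and det: "determined_by J Z"
    using assms(2) unfolding uniform_on_def by auto
  have "{\<omega> \<in> space M. Z \<omega> \<in> {v}} \<in> sigma_coords J" for v
    using det unfolding determined_by_def by blast
  then have ev: "{\<omega> \<in> space M. Z \<omega> = v} \<in> events" for v
    using sigma_coords_subset_events[OF assms(1)] by auto
  have "prob {\<omega> \<in> space M. P (Z \<omega>)} = prob (\<Union>v\<in>{v \<in> V. P v}. {\<omega> \<in> space M. Z \<omega> = v})"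
    using V(2) by (intro arg_cong[where f = prob]) auto
  also have "\<dots> = (\<Sum>v\<in>{v \<in> V. P v}. prob {\<omega> \<in> space M. Z \<omega> = v})"
    using V(1) ev by (intro finite_measure_finite_Union) (auto simp: disjoint_family_on_def)
  also have "\<dots> = card {v \<in> V. P v} / card V"
    using pt by simp
  finally show ?thesis .
qed

lemma uniform_on_cong:
  assumes "uniform_on J V Z" "\<And>\<omega>. \<omega> \<in> space M \<Longrightarrow> Z \<omega> = Z' \<omega>"
  shows "uniform_on J V Z'"
proof -
  have "{\<omega> \<in> space M. Z' \<omega> = v} = {\<omega> \<in> space M. Z \<omega> = v}" for v
    using assms(2) by auto
  then show ?thesis
    using assms determined_by_cong[of J Z Z'] unfolding uniform_on_def by auto
qed

lemma ex_uniform_on_cong: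
  assumes "\<exists>J\<subseteq>coords. uniform_on J V Z" "\<And>\<omega>. \<omega> \<in> space M \<Longrightarrow> Z \<omega> = Z' \<omega>"
  shows "\<exists>J\<subseteq>coords. uniform_on J V Z'"
  using assms uniform_on_cong by blast

lemma uniform_on_nonempty: "uniform_on J V Z \<Longrightarrow> V \<noteq> {}"
  using not_empty unfolding uniform_on_def by auto

lemma uniform_on_map:
  assumes "J \<subseteq> coords" "uniform_on J V Z" "f ` V \<subseteq> W" "finite W"
    and fibres: "\<And>w. w \<in> W \<Longrightarrow> card {v \<in> V. f v = w} = c"
  shows "uniform_on J W (\<lambda>\<omega>. f (Z \<omega>))"
proof -
  have V: "finite V" "V \<noteq> {}" and det: "determined_by J Z" and range: "\<forall>\<omega>\<in>space M. Z \<omega> \<in> V"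
    using assms(2) uniform_on_nonempty unfolding uniform_on_def by auto
  have "card V = (\<Sum>w\<in>W. card {v \<in> V. f v = w})"
    using sum.group[OF V(1) assms(4,3), of "\<lambda>_. 1::nat"] by simp
  also have "\<dots> = c * card W"
    using fibres by simp
  finally have cV: "card V = c * card W" .
  with V have "c \<noteq> 0" by auto
  have "prob {\<omega> \<in> space M. f (Z \<omega>) = w} = 1 / card W" if "w \<in> W" for w
    using uniform_on_prob[OF assms(1,2), of "\<lambda>v. f v = w"] fibres[OF that] cV \<open>c \<noteq> 0\<close> by simp
  then show ?thesis
    unfolding uniform_on_def using assms(3,4) det range by (auto intro: determined_by_comp)
qed

lemma uniform_on_fst:
  assumes "J \<subseteq> coords" "uniform_on J (V \<times> W) Z"
  shows "uniform_on J V (\<lambda>\<omega>. fst (Z \<omega>))"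
proof (rule uniform_on_map[OF assms])
  show "finite V"
    using assms(2) uniform_on_nonempty[OF assms(2)] unfolding uniform_on_def
    by (auto dest: finite_cartesian_productD1)
  fix v assume "v \<in> V"
  then have "{x \<in> V \<times> W. fst x = v} = {v} \<times> W" by auto
  then show "card {x \<in> V \<times> W. fst x = v} = card W"
    by (simp add: card_cartesian_product)
qed auto

lemma uniform_on_snd:
  assumes "J \<subseteq> coords" "uniform_on J (V \<times> W) Z"
  shows "uniform_on J W (\<lambda>\<omega>. snd (Z \<omega>))"
proof (rule uniform_on_map[OF assms])
  show "finite W"
    using assms(2) uniform_on_nonempty[OF assms(2)] unfolding uniform_on_def
    by (auto dest: finite_cartesian_productD2)
  fix w assume "w \<in> W"
  then have "{x \<in> V \<times> W. snd x = w} = V \<times> {w}" by auto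
  then show "card {x \<in> V \<times> W. snd x = w} = card V"
    by (simp add: card_cartesian_product)
qed auto

lemma uniform_on_pair:
  assumes J: "J1 \<subseteq> coords" "J2 \<subseteq> coords" "J1 \<inter> J2 = {}"
    and A: "uniform_on J1 V A" and B: "uniform_on J2 W B"
  shows "uniform_on (J1 \<union> J2) (V \<times> W) (\<lambda>\<omega>. (A \<omega>, B \<omega>))"
proof -
  have fin: "finite V" "finite W" and rA: "\<forall>\<omega>\<in>space M. A \<omega> \<in> V" and rB: "\<forall>\<omega>\<in>space M. B \<omega> \<in> W"
    and dA: "determined_by J1 A" and dB: "determined_by J2 B"
    and pA: "\<And>v. v \<in> V \<Longrightarrow> prob {\<omega> \<in> space M. A \<omega> = v} = 1 / card V"
    and pB: "\<And>w. w \<in> W \<Longrightarrow> prob {\<omega> \<in> space M. B \<omega> = w} = 1 / card W"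
    using A B unfolding uniform_on_def by auto
  have "determined_by (J1 \<union> J2) (\<lambda>\<omega>. (A \<omega>, B \<omega>))"
    using rA fin(1) by (intro determined_by_pair determined_by_mono[OF _ dA] determined_by_mono[OF _ dB])
      (auto intro: finite_subset)
  moreover have "prob {\<omega> \<in> space M. (A \<omega>, B \<omega>) = (v, w)} = 1 / card (V \<times> W)"
    if "v \<in> V" "w \<in> W" for v w
  proof -
    have "{\<omega> \<in> space M. (A \<omega>, B \<omega>) = (v, w)} = {\<omega> \<in> space M. A \<omega> \<in> {v}} \<inter> {\<omega> \<in> space M. B \<omega> \<in> {w}}"
      by auto
    moreover have "{\<omega> \<in> space M. A \<omega> \<in> {v}} \<in> sigma_coords J1" "{\<omega> \<in> space M. B \<omega> \<in> {w}} \<in> sigma_coords J2"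
      using dA dB unfolding determined_by_def by blast+
    ultimately have "prob {\<omega> \<in> space M. (A \<omega>, B \<omega>) = (v, w)}
        = prob {\<omega> \<in> space M. A \<omega> = v} * prob {\<omega> \<in> space M. B \<omega> = w}"
      using indep_setD[OF indep_set_sigma_coords[OF J]] by simp
    then show ?thesis
      using pA[OF that(1)] pB[OF that(2)] by (simp add: card_cartesian_product)
  qed
  ultimately show ?thesis
    unfolding uniform_on_def using fin rA rB by auto
qed

section \<open>Descent through the hierarchy\<close>

lemma uniform_on_S: "1 \<le> q \<Longrightarrow> uniform_on {Inl q} (rha_subsets k q) (S q)"
  unfolding uniform_on_def using S_range S_unif
  by (simp add: finite_rha_subsets determined_by_S card_rha_subsets)

lemma uniform_on_C: "uniform_on {Inr q} {1..k q} (C q)"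
  unfolding uniform_on_def using C_range C_unif by (simp add: determined_by_C)

lemma uniform_on_rha_LR:
  assumes q: "1 \<le> q" and J: "J \<subseteq> coords" "Inl q \<notin> J" and A: "uniform_on J {1..k q} A"
  shows "uniform_on (insert (Inl q) J) ({1..k (q - 1)} \<times> {1..k (q - 1)})
    (\<lambda>\<omega>. (rha_L (\<lambda>m. S m \<omega>) q (A \<omega>), rha_R (\<lambda>m. S m \<omega>) q (A \<omega>)))"
proof -
  let ?U = "{1..k (q - 1)} \<times> {1..k (q - 1)}" and ?V = "rha_subsets k q \<times> {1..k q}"
  have J': "{Inl q} \<union> J \<subseteq> coords" using J q coords_Inl by auto
  have SA: "uniform_on ({Inl q} \<union> J) ?V (\<lambda>\<omega>. (S q \<omega>, A \<omega>))"
    using J q coords_Inl by (intro uniform_on_pair uniform_on_S A) auto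
  have fibres: "card {v \<in> ?V. case_prod rha_pair v = p} = n_supersets (card ?U) 1 (k q)" if "p \<in> ?U" for p
  proof -
    have "{v \<in> ?V. case_prod rha_pair v = p}
        = {(T, a) \<in> {T. T \<subseteq> ?U \<and> card T = k q} \<times> {1..k q}. rha_pair T a = p}"
      unfolding rha_subsets_def by auto
    then show ?thesis
      using card_rha_pair_fibre[of ?U p "k q"] that by simp
  qed
  have range: "case_prod rha_pair ` ?V \<subseteq> ?U"
  proof (rule image_subsetI)
    fix v assume "v \<in> ?V"
    then obtain T a where "v = (T, a)" "T \<in> rha_subsets k q" "a \<in> {1..k q}"
      by blast
    then show "case_prod rha_pair v \<in> ?U"
      using rha_pair_range by simp
  qed
  from uniform_on_map[OF J' SA range _ fibres]
  show ?thesis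
    by (simp add: rha_L_def rha_R_def)
qed

lemma uniform_on_rha_RL:
  assumes q: "1 \<le> q" and J: "J \<subseteq> coords" "Inl q \<notin> J"
    and AB: "uniform_on J ({1..k q} \<times> {1..k q}) (\<lambda>\<omega>. (A \<omega>, B \<omega>))"
  shows "uniform_on (insert (Inl q) J) ({1..k (q - 1)} \<times> {1..k (q - 1)})
    (\<lambda>\<omega>. (rha_R (\<lambda>m. S m \<omega>) q (A \<omega>), rha_L (\<lambda>m. S m \<omega>) q (B \<omega>)))"
proof -
  let ?G = "{1..k (q - 1)}" and ?V = "rha_subsets k q \<times> ({1..k q} \<times> {1..k q})"
  let ?f = "\<lambda>(T, a, b). (snd (rha_pair T a), fst (rha_pair T b))"
  let ?c = "n_supersets (card ?G * card ?G) 1 (k q) + (card ?G * card ?G - 1) * n_supersets (card ?G * card ?G) 2 (k q)"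
  have J': "{Inl q} \<union> J \<subseteq> coords" using J q coords_Inl by auto
  have SAB: "uniform_on ({Inl q} \<union> J) ?V (\<lambda>\<omega>. (S q \<omega>, A \<omega>, B \<omega>))"
    using J q coords_Inl by (intro uniform_on_pair uniform_on_S AB) auto
  have fibres: "card {v \<in> ?V. ?f v = p} = ?c" if pG: "p \<in> ?G \<times> ?G" for p
  proof -
    obtain x y where p: "p = (x, y)" "x \<in> ?G" "y \<in> ?G" using pG by blast
    have "{v \<in> ?V. ?f v = p} = {(T, a, b) \<in> {T. T \<subseteq> ?G \<times> ?G \<and> card T = k q} \<times> {1..k q} \<times> {1..k q}.
        snd (rha_pair T a) = x \<and> fst (rha_pair T b) = y}"
      unfolding rha_subsets_def p(1) by auto
    then show ?thesis
      using card_rha_pair_crossing_fibre[of ?G ?G x y "k q"] p by simp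
  qed
  have range: "?f ` ?V \<subseteq> ?G \<times> ?G"
  proof (rule image_subsetI)
    fix v assume "v \<in> ?V"
    then obtain T a b where "v = (T, a, b)" "T \<in> rha_subsets k q" "a \<in> {1..k q}" "b \<in> {1..k q}"
      by blast
    then show "?f v \<in> ?G \<times> ?G"
      using rha_pair_range by (simp add: mem_Times_iff)
  qed
  from uniform_on_map[OF J' SAB range _ fibres]
  show ?thesis
    by (simp add: rha_L_def rha_R_def)
qed

lemma uniform_on_subblock_index_boundary:
  assumes "J \<subseteq> Inl ` {Suc (n + d)..} \<union> range Inr"
    and "uniform_on J ({1..k (n + d)} \<times> {1..k (n + d)}) (\<lambda>\<omega>. (A \<omega>, B \<omega>))"
  shows "\<exists>J'\<subseteq>coords. uniform_on J' ({1..k n} \<times> {1..k n})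
    (\<lambda>\<omega>. (subblock_index (\<lambda>m. S m \<omega>) n d (2 ^ d - 1) (A \<omega>), subblock_index (\<lambda>m. S m \<omega>) n d 0 (B \<omega>)))"
  using assms
proof (induction d arbitrary: J A B)
  case 0
  then have "J \<subseteq> coords" by (auto simp: coords_def)
  with 0 show ?case by auto
next
  case (Suc d)
  let ?q = "n + Suc d"
  have J: "J \<subseteq> coords" "Inl ?q \<notin> J"
    using Suc.prems(1) by (auto simp: coords_def)
  have "insert (Inl ?q) J \<subseteq> Inl ` {Suc (n + d)..} \<union> range Inr"
    using Suc.prems(1) by auto
  moreover have "uniform_on (insert (Inl ?q) J) ({1..k (n + d)} \<times> {1..k (n + d)})
      (\<lambda>\<omega>. (rha_R (\<lambda>m. S m \<omega>) ?q (A \<omega>), rha_L (\<lambda>m. S m \<omega>) ?q (B \<omega>)))"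
    using uniform_on_rha_RL[OF _ J Suc.prems(2)] by simp
  ultimately show ?case
    unfolding subblock_index_last subblock_index_first by (rule Suc.IH)
qed

lemma uniform_on_subblock_index_consecutive:
  assumes "J \<subseteq> Inl ` {Suc (n + d)..} \<union> range Inr" "uniform_on J {1..k (n + d)} A" "Suc t < 2 ^ d"
  shows "\<exists>J'\<subseteq>coords. uniform_on J' ({1..k n} \<times> {1..k n})
    (\<lambda>\<omega>. (subblock_index (\<lambda>m. S m \<omega>) n d t (A \<omega>), subblock_index (\<lambda>m. S m \<omega>) n d (Suc t) (A \<omega>)))"
  using assms
proof (induction d arbitrary: J A t)
  case 0
  then show ?case by simp
next
  case (Suc d)
  let ?q = "n + Suc d"
  let ?L = "\<lambda>\<omega>. rha_L (\<lambda>m. S m \<omega>) ?q (A \<omega>)" and ?R = "\<lambda>\<omega>. rha_R (\<lambda>m. S m \<omega>) ?q (A \<omega>)"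
  have J: "J \<subseteq> coords" "Inl ?q \<notin> J"
    using Suc.prems(1) by (auto simp: coords_def)
  have J': "insert (Inl ?q) J \<subseteq> Inl ` {Suc (n + d)..} \<union> range Inr"
    using Suc.prems(1) by auto
  then have J'_coords: "insert (Inl ?q) J \<subseteq> coords"
    by (auto simp: coords_def)
  have LR: "uniform_on (insert (Inl ?q) J) ({1..k (n + d)} \<times> {1..k (n + d)}) (\<lambda>\<omega>. (?L \<omega>, ?R \<omega>))"
    using uniform_on_rha_LR[OF _ J Suc.prems(2)] by simp
  consider (left) "Suc t < 2 ^ d" | (right) "2 ^ d \<le> t" | (boundary) "Suc t = 2 ^ d"
    by linarith
  then show ?case
  proof cases
    case left
    then show ?thesis
      using Suc.IH[OF J' uniform_on_fst[OF J'_coords LR]] by simp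
  next
    case right
    moreover have "Suc (t - 2 ^ d) < 2 ^ d"
      using right Suc.prems(3) by simp
    ultimately show ?thesis
      using Suc.IH[OF J' uniform_on_snd[OF J'_coords LR], of "t - 2 ^ d"] by (simp add: Suc_diff_le)
  next
    case boundary
    then have "t = 2 ^ d - 1" by simp
    then show ?thesis
      using uniform_on_subblock_index_boundary[OF J' LR] boundary by simp
  qed
qed

section \<open>Consecutive blocks\<close>

lemma rha_admissible_S: "\<omega> \<in> space M \<Longrightarrow> rha_admissible k (\<lambda>i. S i \<omega>)"
  unfolding rha_admissible_def using S_range by auto

lemma rha_K_eq:
  assumes "\<omega> \<in> space M" "t < 2 ^ e"
  shows "rha_K k (\<lambda>i. S i \<omega>) (\<lambda>i. C i \<omega>) n (2 ^ e + t) = subblock_index (\<lambda>m. S m \<omega>) n e t (C (n + e) \<omega>)"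
  using rha_K_eq_subblock_index[OF rha_admissible_S[OF assms(1)] _ assms(2)] C_range[OF assms(1)] by simp

lemma uniform_on_C_rha_L_C:
  "uniform_on ({Inr q} \<union> {Inl (Suc q), Inr (Suc q)}) ({1..k q} \<times> {1..k q})
    (\<lambda>\<omega>. (C q \<omega>, rha_L (\<lambda>m. S m \<omega>) (Suc q) (C (Suc q) \<omega>)))"
proof -
  have LR: "uniform_on {Inl (Suc q), Inr (Suc q)} ({1..k q} \<times> {1..k q})
      (\<lambda>\<omega>. (rha_L (\<lambda>m. S m \<omega>) (Suc q) (C (Suc q) \<omega>), rha_R (\<lambda>m. S m \<omega>) (Suc q) (C (Suc q) \<omega>)))"
    using uniform_on_rha_LR[of "Suc q" "{Inr (Suc q)}" "C (Suc q)"] uniform_on_C by (simp add: coords_Inr)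
  have "uniform_on {Inl (Suc q), Inr (Suc q)} {1..k q} (\<lambda>\<omega>. rha_L (\<lambda>m. S m \<omega>) (Suc q) (C (Suc q) \<omega>))"
    using uniform_on_fst[OF _ LR] by (simp add: coords_Inl coords_Inr)
  then show ?thesis
    by (intro uniform_on_pair uniform_on_C) (auto simp: coords_Inl coords_Inr)
qed

lemma uniform_on_rha_K_consecutive:
  assumes "1 \<le> j"
  shows "\<exists>J\<subseteq>coords. uniform_on J ({1..k n} \<times> {1..k n})
    (\<lambda>\<omega>. (rha_K k (\<lambda>i. S i \<omega>) (\<lambda>i. C i \<omega>) n j, rha_K k (\<lambda>i. S i \<omega>) (\<lambda>i. C i \<omega>) n (j + 1)))"
proof -
  obtain e t where j: "j = 2 ^ e + t" "t < 2 ^ e"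
    using binary_decomposition[OF assms] .
  let ?K = "\<lambda>j \<omega>. rha_K k (\<lambda>i. S i \<omega>) (\<lambda>i. C i \<omega>) n j"
  let ?sub = "\<lambda>d t A \<omega>. subblock_index (\<lambda>m. S m \<omega>) n d t (A \<omega>)"
  have Kj: "?K j \<omega> = ?sub e t (C (n + e)) \<omega>" if "\<omega> \<in> space M" for \<omega>
    unfolding j(1) by (rule rha_K_eq[OF that j(2)])
  \<comment> \<open>Either both blocks lie in Y^(n+e)_(C_(n+e)), or j + 1 = 2^(e+1) is the first block of
    Y^(n+e+1)_(C_(n+e+1)), i.e. of its left half Y^(n+e)_(L (C_(n+e+1))).\<close>
  show ?thesis
  proof (cases "Suc t < 2 ^ e")
    case True
    have "j + 1 = 2 ^ e + Suc t" using j by simp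
    then have Kj1: "?K (j + 1) \<omega> = ?sub e (Suc t) (C (n + e)) \<omega>" if "\<omega> \<in> space M" for \<omega>
      using rha_K_eq[OF that True] by simp
    have "\<exists>J\<subseteq>coords. uniform_on J ({1..k n} \<times> {1..k n})
        (\<lambda>\<omega>. (?sub e t (C (n + e)) \<omega>, ?sub e (Suc t) (C (n + e)) \<omega>))"
      by (rule uniform_on_subblock_index_consecutive[OF _ uniform_on_C True]) auto
    then show ?thesis
      by (rule ex_uniform_on_cong) (simp only: Kj Kj1)
  next
    case False
    let ?L = "\<lambda>\<omega>. rha_L (\<lambda>m. S m \<omega>) (n + Suc e) (C (n + Suc e) \<omega>)"
    have "t = 2 ^ e - 1" "j + 1 = 2 ^ Suc e + 0"
      using False j by auto
    then have Kj1: "?K (j + 1) \<omega> = ?sub e 0 ?L \<omega>" if "\<omega> \<in> space M" for \<omega>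
      using rha_K_eq[OF that, of 0 "Suc e"] subblock_index_first by simp
    have "uniform_on ({Inr (n + e)} \<union> {Inl (n + Suc e), Inr (n + Suc e)})
        ({1..k (n + e)} \<times> {1..k (n + e)}) (\<lambda>\<omega>. (C (n + e) \<omega>, ?L \<omega>))"
      using uniform_on_C_rha_L_C[of "n + e"] by simp
    then have "\<exists>J\<subseteq>coords. uniform_on J ({1..k n} \<times> {1..k n})
        (\<lambda>\<omega>. (?sub e (2 ^ e - 1) (C (n + e)) \<omega>, ?sub e 0 ?L \<omega>))"
      by (rule uniform_on_subblock_index_boundary[rotated]) auto
    then show ?thesis
      by (rule ex_uniform_on_cong) (simp only: Kj Kj1 \<open>t = 2 ^ e - 1\<close>)
  qed
qed

lemma prob_rha_K_consecutive:
  assumes "1 \<le> j" "l \<in> {1..k n}" "m \<in> {1..k n}"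
  shows "prob {\<omega> \<in> space M. rha_K k (\<lambda>i. S i \<omega>) (\<lambda>i. C i \<omega>) n j = l \<and>
      rha_K k (\<lambda>i. S i \<omega>) (\<lambda>i. C i \<omega>) n (j + 1) = m} = 1 / (real (k n))\<^sup>2"
proof -
  obtain J where "uniform_on J ({1..k n} \<times> {1..k n})
      (\<lambda>\<omega>. (rha_K k (\<lambda>i. S i \<omega>) (\<lambda>i. C i \<omega>) n j, rha_K k (\<lambda>i. S i \<omega>) (\<lambda>i. C i \<omega>) n (j + 1)))"
    using uniform_on_rha_K_consecutive[OF assms(1)] by blast
  then show ?thesis
    using assms(2,3) unfolding uniform_on_def by (auto simp: card_cartesian_product power2_eq_square)
qed

lemma determined_by_subblock_index:
  assumes "\<And>i. n < i \<Longrightarrow> i \<le> n + d \<Longrightarrow> Inl i \<in> J" "determined_by J A"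
  shows "determined_by J (\<lambda>\<omega>. subblock_index (\<lambda>m. S m \<omega>) n d t (A \<omega>))"
  using assms
proof (induction d arbitrary: t A)
  case 0
  then show ?case by simp
next
  case (Suc d)
  let ?q = "n + Suc d"
  have SA: "determined_by J (\<lambda>\<omega>. (S ?q \<omega>, A \<omega>))"
    using Suc.prems by (intro determined_by_pair determined_by_S finite_image_S) auto
  have L: "determined_by J (\<lambda>\<omega>. rha_L (\<lambda>m. S m \<omega>) ?q (A \<omega>))"
    using determined_by_comp[OF SA, of "\<lambda>(T, a). fst (rha_pair T a)"] by (simp add: rha_L_def)
  have R: "determined_by J (\<lambda>\<omega>. rha_R (\<lambda>m. S m \<omega>) ?q (A \<omega>))"
    using determined_by_comp[OF SA, of "\<lambda>(T, a). snd (rha_pair T a)"] by (simp add: rha_R_def)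
  have "\<And>i. n < i \<Longrightarrow> i \<le> n + d \<Longrightarrow> Inl i \<in> J"
    using Suc.prems(1) by simp
  then show ?case
    using Suc.IH[OF _ L] Suc.IH[OF _ R] by (cases "t < 2 ^ d") simp_all
qed

lemma determined_by_rha_K:
  assumes "1 \<le> j"
  shows "determined_by (Inl ` {Suc n..} \<union> range Inr) (\<lambda>\<omega>. rha_K k (\<lambda>i. S i \<omega>) (\<lambda>i. C i \<omega>) n j)"
proof -
  obtain e t where j: "j = 2 ^ e + t" "t < 2 ^ e"
    using binary_decomposition[OF assms] .
  have "determined_by (Inl ` {Suc n..} \<union> range Inr) (\<lambda>\<omega>. subblock_index (\<lambda>m. S m \<omega>) n e t (C (n + e) \<omega>))"
    by (rule determined_by_subblock_index) (auto intro: determined_by_C)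
  then show ?thesis
    by (rule determined_by_cong) (simp add: rha_K_eq j)
qed

lemma sets_vimage_algebra_subset_sigma_coords:
  assumes "\<And>i. i \<in> I \<Longrightarrow> determined_by J (X i)"
  shows "sets (vimage_algebra (space M) (\<lambda>\<omega>. \<lambda>i\<in>I. X i \<omega>) (Pi\<^sub>M I (\<lambda>_. count_space UNIV))) \<subseteq> sigma_coords J"
proof -
  let ?N = "sigma (space M) (\<Union>i\<in>J. coord_events i)"
  have "(\<Union>i\<in>J. coord_events i) \<subseteq> Pow (space M)"
    by (auto simp: coord_events_def)
  then have space_N: "space ?N = space M" and sets_N: "sets ?N = sigma_coords J"
    unfolding sigma_coords_def by simp_all
  have "X i \<in> measurable ?N (count_space UNIV)" if "i \<in> I" for i
    using assms[OF that] unfolding measurable_def determined_by_def space_N sets_N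
    by (auto simp: vimage_def Int_def conj_commute)
  then have "(\<lambda>\<omega>. \<lambda>i\<in>I. X i \<omega>) \<in> measurable ?N (Pi\<^sub>M I (\<lambda>_. count_space UNIV))"
    by (rule measurable_restrict)
  then show ?thesis
    unfolding measurable_iff_sets space_N sets_N by simp
qed

lemma indep_set_rha_K_rha_LR:
  "indep_set
     (sets (vimage_algebra (space M)
        (\<lambda>\<omega>. \<lambda>j\<in>{1..}. rha_K k (\<lambda>m. S m \<omega>) (\<lambda>m. C m \<omega>) n j)
        (Pi\<^sub>M {1..} (\<lambda>_. count_space UNIV))))
     (sets (vimage_algebra (space M)
        (\<lambda>\<omega>. \<lambda>(l, j)\<in>rha_Gidx k n. (rha_L (\<lambda>m. S m \<omega>) l j, rha_R (\<lambda>m. S m \<omega>) l j))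
        (Pi\<^sub>M (rha_Gidx k n) (\<lambda>_. count_space UNIV))))"
proof -
  let ?J1 = "Inl ` {Suc n..} \<union> range Inr" and ?J2 = "Inl ` {1..n} :: (nat + nat) set"
  have indep: "indep_set (sigma_coords ?J1) (sigma_coords ?J2)"
    by (rule indep_set_sigma_coords) (auto simp: coords_def)
  have K: "sets (vimage_algebra (space M)
        (\<lambda>\<omega>. \<lambda>j\<in>{1..}. rha_K k (\<lambda>m. S m \<omega>) (\<lambda>m. C m \<omega>) n j)
        (Pi\<^sub>M {1..} (\<lambda>_. count_space UNIV))) \<subseteq> sigma_coords ?J1"
    by (rule sets_vimage_algebra_subset_sigma_coords) (simp add: determined_by_rha_K)
  have LR: "sets (vimage_algebra (space M)
        (\<lambda>\<omega>. \<lambda>(l, j)\<in>rha_Gidx k n. (rha_L (\<lambda>m. S m \<omega>) l j, rha_R (\<lambda>m. S m \<omega>) l j))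
        (Pi\<^sub>M (rha_Gidx k n) (\<lambda>_. count_space UNIV))) \<subseteq> sigma_coords ?J2"
  proof (rule sets_vimage_algebra_subset_sigma_coords)
    fix i assume "i \<in> rha_Gidx k n"
    then obtain l j where i: "i = (l, j)" "Inl l \<in> ?J2"
      unfolding rha_Gidx_def by auto
    show "determined_by ?J2 (\<lambda>\<omega>. case i of (l, j) \<Rightarrow> (rha_L (\<lambda>m. S m \<omega>) l j, rha_R (\<lambda>m. S m \<omega>) l j))"
      using determined_by_comp[OF determined_by_S[OF i(2)], of "\<lambda>T. rha_pair T j"]
      unfolding i(1) by (simp add: rha_L_def rha_R_def)
  qed
  from indep show ?thesis
    unfolding indep_set_def by (rule indep_sets_mono_sets) (use K LR in \<open>auto split: bool.split\<close>)
qed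

end

theorem proposition1:
  fixes M :: "'a measure"
    and k :: "nat \<Rightarrow> nat"
    and S :: "nat \<Rightarrow> 'a \<Rightarrow> (nat \<times> nat) set"
    and C :: "nat \<Rightarrow> 'a \<Rightarrow> nat"
    and n :: nat
  assumes P: "prob_space M"
    and kpos: "\<And>i. k i \<ge> 1"
    and kmono: "\<And>i. i \<ge> 1 \<Longrightarrow> k (i - 1) \<le> k i \<and> k i \<le> (k (i - 1))\<^sup>2"
    and S_range: "\<And>i \<omega>. i \<ge> 1 \<Longrightarrow> \<omega> \<in> space M \<Longrightarrow> S i \<omega> \<in> rha_subsets k i"
    and S_unif: "\<And>i A. i \<ge> 1 \<Longrightarrow> A \<in> rha_subsets k i \<Longrightarrow>
        measure M {\<omega> \<in> space M. S i \<omega> = A} = 1 / real ((k (i - 1))\<^sup>2 choose k i)"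
    and C_range: "\<And>i \<omega>. \<omega> \<in> space M \<Longrightarrow> C i \<omega> \<in> {1..k i}"
    and C_unif: "\<And>i l. l \<in> {1..k i} \<Longrightarrow> measure M {\<omega> \<in> space M. C i \<omega> = l} = 1 / real (k i)"
    and indep: "prob_space.indep_vars M (\<lambda>_. count_space UNIV)
        (\<lambda>i \<omega>. case i of Inl m \<Rightarrow> Inl (S m \<omega>) | Inr m \<Rightarrow> Inr (C m \<omega>))
        (Inl ` {1..} \<union> range Inr)"
  shows "prob_space.indep_set M
           (sets (vimage_algebra (space M)
              (\<lambda>\<omega>. \<lambda>j\<in>{1..}. rha_K k (\<lambda>m. S m \<omega>) (\<lambda>m. C m \<omega>) n j)
              (Pi\<^sub>M {1..} (\<lambda>_. count_space UNIV))))
           (sets (vimage_algebra (space M)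
              (\<lambda>\<omega>. \<lambda>(l, j)\<in>rha_Gidx k n. (rha_L (\<lambda>m. S m \<omega>) l j, rha_R (\<lambda>m. S m \<omega>) l j))
              (Pi\<^sub>M (rha_Gidx k n) (\<lambda>_. count_space UNIV))))
       \<and> (\<forall>j\<ge>1. \<forall>l\<in>{1..k n}. \<forall>m\<in>{1..k n}.
            measure M {\<omega> \<in> space M.
                rha_K k (\<lambda>i. S i \<omega>) (\<lambda>i. C i \<omega>) n j = l \<and>
                rha_K k (\<lambda>i. S i \<omega>) (\<lambda>i. C i \<omega>) n (j + 1) = m}
              = 1 / (real (k n))\<^sup>2)"
proof -
  interpret rha_process M k S C
    using P S_range S_unif C_range C_unif indep by (simp add: rha_process_def rha_process_axioms_def)
  show ?thesis
    using indep_set_rha_K_rha_LR prob_rha_K_consecutive by blast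
qed

end
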